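(* Let $\rho_z$ and $\rho_{z'}$ be the discounted state occupation measures of a fixed policy from initial states $z,z'\in\mathcal{S}$, let $R:\mathcal{S}\to\mathbb{R}^d$ be a bounded measurable function, and set $H=\big\|\int R(s)\,\rho_z(ds)\big\|$. Then \[ q:=\int\!\!\int R(s)^\top R(s')\,\rho_z(ds)\,\rho_{z'}(ds') \;\ge\; H\Big(H-2\,\|R\|_{\infty,2}\,\|\Delta_{z',z}\|_{\mathrm{TV}}\Big). \]
   Context: For a Markov decision process with state space $\mathcal{S}$, policy $\pi$, and discount factor $\gamma\in(0,1)$, the discounted state occupation measure from $z$ is $\rho_z(\cdot)=(1-\gamma)\sum_{t\ge0}\gamma^t\,\mathbb{P}(s_t\in\cdot\mid s_0=z,\pi)$ (a probability measure on $\mathcal{S}$). $\Delta_{z',z}=\rho_{z'}-\rho_z$ is a signed measure and $\|\Delta_{z',z}\|_{\mathrm{TV}}=\sup_B|\Delta_{z',z}(B)|$ is its total variation norm. $\|\cdot\|$ is the Euclidean norm, and $\|R\|_{\infty,2}=\sqrt{\sum_{i=1}^d\big(\sup_{s\in\mathcal{S}}|[R(s)]_i|\big)^2}$. *)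

theory Defs
  imports "HOL-Probability.Probability"
begin

text \<open>State space: measurable space M. The fixed policy pi together with the MDP
transition law induces a Markov kernel K on the states:
K s = distribution of s_{t+1} given s_t = s under pi.\<close>

fun state_dist :: "'s measure \<Rightarrow> ('s \<Rightarrow> 's measure) \<Rightarrow> nat \<Rightarrow> 's \<Rightarrow> 's measure" where
  "state_dist M K 0 z = return M z"
| "state_dist M K (Suc t) z = bind (state_dist M K t z) K"

definition occupation :: "'s measure \<Rightarrow> ('s \<Rightarrow> 's measure) \<Rightarrow> real \<Rightarrow> 's \<Rightarrow> 's measure" where
  "occupation M K \<gamma> z = measure_of (space M) (sets M)
     (\<lambda>B. ennreal (1 - \<gamma>) * (\<Sum>t. ennreal (\<gamma> ^ t) * emeasure (state_dist M K t z) B))"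

definition tv_dist :: "'s measure \<Rightarrow> 's measure \<Rightarrow> real" where
  "tv_dist \<mu>' \<mu> = (SUP B\<in>sets \<mu>. \<bar>measure \<mu>' B - measure \<mu> B\<bar>)"

definition sup2_norm :: "'s measure \<Rightarrow> ('s \<Rightarrow> real ^ 'd) \<Rightarrow> real" where
  "sup2_norm M R = sqrt (\<Sum>i\<in>UNIV. (SUP s\<in>space M. \<bar>R s $ i\<bar>)\<^sup>2)"

end

theory Submission
  imports Defs
begin

text \<open>The occupation measures are probability measures (geometric mixtures of the state
distributions), so with the mean vectors m = \<integral>R d\<rho> and m' = \<integral>R d\<rho>' we have
q = m \<bullet> m' = |m|^2 + m \<bullet> (m' - m) \<ge> H (H - |m' - m|) by Cauchy-Schwarz. A Hahn decomposition
of \<rho>' - \<rho> shows that the integrals of a function with values in [-c, c] against \<rho> and \<rho>'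
differ by at most 2 c ||\<Delta>||_TV; applied to each coordinate of R with c = sup |R_i| this gives
|m' - m| \<le> 2 ||R||_{\<infinity>,2} ||\<Delta>||_TV.\<close>

lemma bind_in_space_prob_algebra:
  assumes "A \<in> space (prob_algebra N)" and "B \<in> N \<rightarrow>\<^sub>M prob_algebra M"
  shows "A \<bind> B \<in> space (prob_algebra M)"
  using prob_space_bind'[OF assms] sets_bind'[OF assms] by (simp add: space_prob_algebra)

lemma state_dist_in_prob_algebra:
  assumes K: "K \<in> M \<rightarrow>\<^sub>M prob_algebra M" and z: "z \<in> space M"
  shows "state_dist M K t z \<in> space (prob_algebra M)"
proof (induction t)
  case 0
  show ?case using z by (simp add: space_prob_algebra prob_space_return)
next
  case (Suc t)
  then show ?case using bind_in_space_prob_algebra[OF Suc K] by simp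
qed

lemma occupation_eq_bind_geometric:
  assumes "0 \<le> \<gamma>" and "\<gamma> < 1"
    and K: "K \<in> M \<rightarrow>\<^sub>M prob_algebra M" and z: "z \<in> space M"
  shows "occupation M K \<gamma> z = measure_pmf (geometric_pmf (1 - \<gamma>)) \<bind> (\<lambda>t. state_dist M K t z)"
proof -
  let ?G = "measure_pmf (geometric_pmf (1 - \<gamma>))"
  let ?N = "?G \<bind> (\<lambda>t. state_dist M K t z)"
  have G: "?G \<in> space (prob_algebra ?G)"
    by (simp add: space_prob_algebra measure_pmf.prob_space_axioms)
  have dist: "(\<lambda>t. state_dist M K t z) \<in> ?G \<rightarrow>\<^sub>M prob_algebra M"
    using state_dist_in_prob_algebra[OF K z] by simp
  have sets_N: "sets ?N = sets M" by (rule sets_bind'[OF G dist])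
  have emeasure_N: "emeasure ?N X
      = ennreal (1 - \<gamma>) * (\<Sum>t. ennreal (\<gamma> ^ t) * emeasure (state_dist M K t z) X)"
    if X: "X \<in> sets M" for X
  proof -
    have "emeasure ?N X = (\<integral>\<^sup>+t. emeasure (state_dist M K t z) X \<partial>?G)"
      by (rule emeasure_bind_prob_algebra[OF G dist X])
    also have "\<dots> = (\<Sum>t. ennreal (1 - \<gamma>) * (ennreal (\<gamma> ^ t) * emeasure (state_dist M K t z) X))"
      using assms(1,2)
      by (simp add: nn_integral_measure_pmf nn_integral_count_space_nat ennreal_mult mult_ac)
    also have "\<dots> = ennreal (1 - \<gamma>) * (\<Sum>t. ennreal (\<gamma> ^ t) * emeasure (state_dist M K t z) X)"
      by (rule ennreal_suminf_cmult)
    finally show ?thesis .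
  qed
  have "occupation M K \<gamma> z = measure_of (space M) (sets M) (emeasure ?N)"
    unfolding occupation_def
    by (rule measure_of_eq) (auto simp: sets.sigma_sets_eq emeasure_N sets.space_closed)
  also have "\<dots> = ?N"
    using measure_of_of_measure[of ?N] sets_N sets_eq_imp_space_eq[OF sets_N] by simp
  finally show ?thesis .
qed

lemma occupation_in_prob_algebra:
  assumes "0 \<le> \<gamma>" and "\<gamma> < 1"
    and K: "K \<in> M \<rightarrow>\<^sub>M prob_algebra M" and z: "z \<in> space M"
  shows "occupation M K \<gamma> z \<in> space (prob_algebra M)"
  unfolding occupation_eq_bind_geometric[OF assms]
  by (rule bind_in_space_prob_algebra[where N = "measure_pmf (geometric_pmf (1 - \<gamma>))"])
    (simp add: space_prob_algebra measure_pmf.prob_space_axioms,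
     simp add: state_dist_in_prob_algebra[OF K z])

lemma integrable_bounded:
  fixes f :: "'a \<Rightarrow> 'b::{banach, second_countable_topology}"
  assumes "finite_measure N" and sets_N: "sets N = sets M"
    and f: "f \<in> borel_measurable M" and f_bound: "\<And>x. x \<in> space M \<Longrightarrow> norm (f x) \<le> C"
  shows "integrable N f"
proof -
  interpret N: finite_measure N by fact
  show ?thesis
    using f f_bound sets_eq_imp_space_eq[OF sets_N]
    by (intro N.integrable_const_bound[of _ C]) (auto simp: measurable_cong_sets[OF sets_N refl])
qed

lemma abs_measure_diff_le_tv_dist:
  assumes "finite_measure P" and "finite_measure Q" and "sets Q = sets P" and B: "B \<in> sets P"
  shows "\<bar>measure Q B - measure P B\<bar> \<le> tv_dist Q P"
proof -
  interpret P: finite_measure P by fact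
  interpret Q: finite_measure Q by fact
  have "bdd_above ((\<lambda>B. \<bar>measure Q B - measure P B\<bar>) ` sets P)"
  proof (rule bdd_aboveI)
    fix x assume "x \<in> (\<lambda>B. \<bar>measure Q B - measure P B\<bar>) ` sets P"
    then obtain A where "x = \<bar>measure Q A - measure P A\<bar>" by blast
    then show "x \<le> measure Q (space Q) + measure P (space P)"
      using Q.bounded_measure[of A] P.bounded_measure[of A]
        measure_nonneg[of Q A] measure_nonneg[of P A]
      by arith
  qed
  then show ?thesis
    unfolding tv_dist_def \<open>sets Q = sets P\<close> by (rule cSUP_upper[OF B])
qed

lemma tv_dist_nonneg:
  assumes "finite_measure P" and "finite_measure Q" and "sets Q = sets P"
  shows "0 \<le> tv_dist Q P"
  using abs_measure_diff_le_tv_dist[OF assms sets.empty_sets] by simp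

lemma tv_dist_commute:
  assumes "sets Q = sets P"
  shows "tv_dist P Q = tv_dist Q P"
  unfolding tv_dist_def assms by (simp add: abs_minus_commute)

lemma density_indicator_mono_measure:
  assumes sets_Q: "sets Q = sets P" and S: "S \<in> sets P"
    and le: "\<And>X. X \<in> sets P \<Longrightarrow> X \<subseteq> S \<Longrightarrow> emeasure Q X \<le> emeasure P X"
  shows "density Q (indicator S) \<le> density P (indicator S)"
proof -
  have "emeasure (density Q (indicator S)) A \<le> emeasure (density P (indicator S)) A" for A
  proof (cases "A \<in> sets P")
    case True
    then show ?thesis
      using emeasure_restricted[of S Q A] emeasure_restricted[OF S True] le[of "S \<inter> A"] sets_Q S
      by (simp add: sets.Int)
  next
    case False
    then show ?thesis using sets_Q by (simp add: emeasure_notin_sets)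
  qed
  then show ?thesis
    using sets_eq_imp_space_eq[OF sets_Q] sets_Q by (simp add: le_measure_iff le_fun_def)
qed

lemma integral_mult_indicator_mono_measure:
  fixes f :: "'a \<Rightarrow> real"
  assumes "finite_measure P" and "finite_measure Q" and sets_Q: "sets Q = sets P"
    and S: "S \<in> sets P" and le: "\<And>X. X \<in> sets P \<Longrightarrow> X \<subseteq> S \<Longrightarrow> emeasure Q X \<le> emeasure P X"
    and f: "f \<in> borel_measurable P" and f_bounds: "\<And>x. x \<in> space P \<Longrightarrow> 0 \<le> f x \<and> f x \<le> D"
  shows "(\<integral>x. f x * indicator S x \<partial>Q) \<le> (\<integral>x. f x * indicator S x \<partial>P)"
proof -
  have "(\<integral>\<^sup>+x. f x \<partial>density Q (indicator S)) \<le> (\<integral>\<^sup>+x. f x \<partial>density P (indicator S))"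
    using density_indicator_mono_measure[OF sets_Q S le] sets_Q
    by (intro nn_integral_mono_measure) simp_all
  moreover have "ennreal (f x * indicator S x) = indicator S x * ennreal (f x)" for x
    by (simp add: indicator_def)
  ultimately have "(\<integral>\<^sup>+x. f x * indicator S x \<partial>Q) \<le> (\<integral>\<^sup>+x. f x * indicator S x \<partial>P)"
    using f S sets_Q by (simp add: nn_integral_density measurable_cong_sets[OF sets_Q refl])
  moreover have "integrable N (\<lambda>x. f x * indicator S x)" "AE x in N. 0 \<le> f x * indicator S x"
    if "finite_measure N" "sets N = sets P" for N
  proof -
    have "integrable N f"
      by (rule integrable_bounded[OF that f]) (use f_bounds in fastforce)
    then show "integrable N (\<lambda>x. f x * indicator S x)"
      using S that(2) by (simp add: integrable_real_mult_indicator)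
    show "AE x in N. 0 \<le> f x * indicator S x"
      using f_bounds sets_eq_imp_space_eq[OF that(2)] by (intro AE_I2) simp
  qed
  ultimately show ?thesis
    using assms(1,2) sets_Q by (simp add: nn_integral_eq_integral integral_nonneg_AE)
qed

lemma integral_split_indicator_complement:
  fixes g :: "'a \<Rightarrow> real"
  assumes "finite_measure N" and Y: "Y \<in> sets N" and g: "integrable N g"
  shows "(\<integral>x. g x \<partial>N) = (\<integral>x. g x * indicator Y x \<partial>N) + D * measure N (space N - Y)
      - (\<integral>x. (D - g x) * indicator (space N - Y) x \<partial>N)"
proof -
  interpret N: finite_measure N by fact
  have Z: "space N - Y \<in> sets N" using Y by auto
  have "(\<integral>x. g x \<partial>N) = (\<integral>x. g x * indicator Y x + D * indicator (space N - Y) x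
      - (D - g x) * indicator (space N - Y) x \<partial>N)"
    by (intro Bochner_Integration.integral_cong) (auto simp: indicator_def)
  also have "\<dots> = (\<integral>x. g x * indicator Y x \<partial>N) + D * measure N (space N - Y)
      - (\<integral>x. (D - g x) * indicator (space N - Y) x \<partial>N)"
    using Y Z g
    by (simp add: integrable_real_mult_indicator N.emeasure_eq_measure
        Bochner_Integration.integral_diff Bochner_Integration.integral_add)
  finally show ?thesis .
qed

text \<open>Take a Hahn decomposition: Q \<le> P on Y and P \<le> Q on its complement Z. Passing from P to
Q, the integral of g over Y can only decrease and that of D - g over Z only increase, which
leaves at most D (Q Z - P Z).\<close>

lemma integral_diff_le_tv_dist:
  fixes g :: "'a \<Rightarrow> real"
  assumes P: "prob_space P" and Q: "prob_space Q" and sets_Q: "sets Q = sets P"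
    and g: "g \<in> borel_measurable P" and g_bounds: "\<And>x. x \<in> space P \<Longrightarrow> 0 \<le> g x \<and> g x \<le> D"
  shows "(\<integral>x. g x \<partial>Q) - (\<integral>x. g x \<partial>P) \<le> D * tv_dist Q P"
proof -
  interpret P: prob_space P by fact
  interpret Q: prob_space Q by fact
  have space_Q: "space Q = space P" using sets_Q by (rule sets_eq_imp_space_eq)
  obtain Y where Y: "Y \<in> sets P"
    and Q_le_P: "\<forall>X\<in>sets P. X \<subseteq> Y \<longrightarrow> emeasure Q X \<le> emeasure P X"
    and P_le_Q: "\<forall>X\<in>sets P. X \<inter> Y = {} \<longrightarrow> emeasure P X \<le> emeasure Q X"
    using finite_unsigned_Hahn_decomposition[of P Q] sets_Q by auto
  define Z where "Z = space P - Y"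
  have Z: "Z \<in> sets P" unfolding Z_def using Y by auto
  have "D \<ge> 0" using g_bounds P.not_empty by fastforce
  have integrable_g: "integrable N g" if "finite_measure N" "sets N = sets P" for N
    by (rule integrable_bounded[OF that g]) (use g_bounds in fastforce)
  have split_P: "(\<integral>x. g x \<partial>P) = (\<integral>x. g x * indicator Y x \<partial>P) + D * measure P Z
      - (\<integral>x. (D - g x) * indicator Z x \<partial>P)"
    unfolding Z_def
    by (rule integral_split_indicator_complement[OF _ Y integrable_g]) simp_all
  have split_Q: "(\<integral>x. g x \<partial>Q) = (\<integral>x. g x * indicator Y x \<partial>Q) + D * measure Q Z
      - (\<integral>x. (D - g x) * indicator Z x \<partial>Q)"
    unfolding Z_def space_Q[symmetric]
    by (rule integral_split_indicator_complement) (use Y sets_Q integrable_g in auto)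
  have "(\<integral>x. g x * indicator Y x \<partial>Q) \<le> (\<integral>x. g x * indicator Y x \<partial>P)"
    using Q_le_P g g_bounds by (intro integral_mult_indicator_mono_measure[OF _ _ sets_Q Y]) auto
  moreover have "(\<integral>x. (D - g x) * indicator Z x \<partial>P) \<le> (\<integral>x. (D - g x) * indicator Z x \<partial>Q)"
    using P_le_Q g g_bounds Z sets_Q space_Q
    by (intro integral_mult_indicator_mono_measure[where P = Q and Q = P and D = D])
      (auto simp: Z_def)
  moreover have "D * (measure Q Z - measure P Z) \<le> D * tv_dist Q P"
    using abs_measure_diff_le_tv_dist[OF _ _ sets_Q Z] \<open>D \<ge> 0\<close> by (intro mult_left_mono) auto
  ultimately show ?thesis
    unfolding split_P split_Q using right_diff_distrib[of D "measure Q Z" "measure P Z"] by linarith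
qed

lemma abs_integral_diff_le_tv_dist:
  fixes g :: "'a \<Rightarrow> real"
  assumes P: "prob_space P" and Q: "prob_space Q" and sets_Q: "sets Q = sets P"
    and g: "g \<in> borel_measurable P" and g_bound: "\<And>x. x \<in> space P \<Longrightarrow> \<bar>g x\<bar> \<le> c"
  shows "\<bar>(\<integral>x. g x \<partial>Q) - (\<integral>x. g x \<partial>P)\<bar> \<le> 2 * c * tv_dist Q P"
proof -
  interpret P: prob_space P by fact
  interpret Q: prob_space Q by fact
  have space_Q: "space Q = space P" using sets_Q by (rule sets_eq_imp_space_eq)
  have g_Q: "g \<in> borel_measurable Q" using g by (simp add: measurable_cong_sets[OF sets_Q refl])
  have shifted_bounds: "0 \<le> g x + c \<and> g x + c \<le> 2 * c" if "x \<in> space P" for x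
    using g_bound[OF that] by linarith
  have "integrable P g" "integrable Q g"
    using integrable_bounded[OF _ _ g, of _ c] g_bound sets_Q
    by (simp_all add: P.finite_measure_axioms Q.finite_measure_axioms)
  moreover have "(\<integral>x. g x + c \<partial>Q) - (\<integral>x. g x + c \<partial>P) \<le> 2 * c * tv_dist Q P"
    using g shifted_bounds by (intro integral_diff_le_tv_dist[OF P Q sets_Q]) auto
  moreover have "(\<integral>x. g x + c \<partial>P) - (\<integral>x. g x + c \<partial>Q) \<le> 2 * c * tv_dist P Q"
    using g_Q shifted_bounds space_Q by (intro integral_diff_le_tv_dist[OF Q P sets_Q[symmetric]]) auto
  ultimately show ?thesis
    using tv_dist_commute[OF sets_Q] by (simp add: P.prob_space Q.prob_space abs_le_iff)
qed

lemma integral_vec_nth: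
  fixes f :: "'a \<Rightarrow> real ^ 'n"
  assumes "integrable N f"
  shows "(\<integral>x. f x \<partial>N) $ i = (\<integral>x. f x $ i \<partial>N)"
  using integral_bounded_linear[OF bounded_linear_vec_nth assms] by simp

lemma abs_vec_nth_le_SUP:
  fixes R :: "'s \<Rightarrow> real ^ 'n"
  assumes "\<And>s. s \<in> S \<Longrightarrow> norm (R s) \<le> C" and "s \<in> S"
  shows "\<bar>R s $ i\<bar> \<le> (SUP s\<in>S. \<bar>R s $ i\<bar>)"
proof -
  have "bdd_above ((\<lambda>s. \<bar>R s $ i\<bar>) ` S)"
    using assms(1) by (intro bdd_aboveI[where M = C]) (auto intro: order_trans[OF component_le_norm_cart])
  then show ?thesis using assms(2) by (rule cSUP_upper2) simp
qed

lemma norm_integral_diff_le_sup2_norm: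
  fixes R :: "'s \<Rightarrow> real ^ 'd"
  assumes P: "prob_space P" and Q: "prob_space Q"
    and sets_P: "sets P = sets M" and sets_Q: "sets Q = sets M"
    and R: "R \<in> borel_measurable M" and R_bound: "\<And>s. s \<in> space M \<Longrightarrow> norm (R s) \<le> C"
  shows "norm ((\<integral>s. R s \<partial>Q) - (\<integral>s. R s \<partial>P)) \<le> 2 * sup2_norm M R * tv_dist Q P"
proof -
  define T where "T = tv_dist Q P"
  define c where "c i = (SUP s\<in>space M. \<bar>R s $ i\<bar>)" for i
  have "0 \<le> T"
    unfolding T_def using sets_P sets_Q by (intro tv_dist_nonneg prob_space.finite_measure P Q) simp
  have integrable: "integrable N R" if "prob_space N" "sets N = sets M" for N
    using integrable_bounded[OF prob_space.finite_measure[OF that(1)] that(2) R R_bound] .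
  have R_component: "(\<lambda>s. R s $ i) \<in> borel_measurable M" for i
    by (intro measurable_compose[OF R] borel_measurable_continuous_onI continuous_on_component
        continuous_on_id)
  have "\<bar>(\<integral>s. R s \<partial>Q) $ i - (\<integral>s. R s \<partial>P) $ i\<bar> \<le> 2 * c i * T" for i
    unfolding integral_vec_nth[OF integrable[OF P sets_P]] integral_vec_nth[OF integrable[OF Q sets_Q]]
      T_def c_def
    using R_component abs_vec_nth_le_SUP[OF R_bound] sets_eq_imp_space_eq[OF sets_P] sets_P sets_Q
    by (intro abs_integral_diff_le_tv_dist[OF P Q]) (auto simp: measurable_cong_sets[OF sets_P refl])
  then have "norm ((\<integral>s. R s \<partial>Q) - (\<integral>s. R s \<partial>P)) \<le> norm ((2 * T) *\<^sub>R (\<chi> i. c i))"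
    by (intro norm_le_componentwise_cart) (auto simp: mult_ac intro: order_trans[OF _ abs_ge_self])
  also have "\<dots> = 2 * T * norm (\<chi> i. c i)"
    using \<open>0 \<le> T\<close> by simp
  also have "norm (\<chi> i. c i) = sup2_norm M R"
    unfolding sup2_norm_def norm_vec_def L2_set_def c_def by simp
  finally show ?thesis unfolding T_def by (simp add: mult_ac)
qed

lemma inner_ge_norm_mult_norm_diff:
  fixes m m' :: "'a::real_inner"
  shows "norm m * (norm m - norm (m' - m)) \<le> m \<bullet> m'"
proof -
  have "m \<bullet> m' = norm m * norm m + m \<bullet> (m' - m)"
    by (simp add: inner_diff_right power2_eq_square[symmetric] power2_norm_eq_inner)
  moreover have "- (norm m * norm (m' - m)) \<le> m \<bullet> (m' - m)"
    using Cauchy_Schwarz_ineq2[of m "m' - m"] by linarith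
  ultimately show ?thesis by (simp add: algebra_simps)
qed

theorem lemma1:
  fixes M :: "'s measure" and K :: "'s \<Rightarrow> 's measure" and \<gamma> :: real
    and z z' :: 's and R :: "'s \<Rightarrow> real ^ 'd"
  assumes "0 < \<gamma>" and "\<gamma> < 1"
    and "K \<in> measurable M (prob_algebra M)"
    and "z \<in> space M" and "z' \<in> space M"
    and "R \<in> borel_measurable M"
    and "\<exists>C. \<forall>s\<in>space M. norm (R s) \<le> C"
  shows "let \<rho> = occupation M K \<gamma> z; \<rho>' = occupation M K \<gamma> z';
             H = norm (LINT s|\<rho>. R s);
             q = (LINT s'|\<rho>'. (LINT s|\<rho>. R s \<bullet> R s'))
         in q \<ge> H * (H - 2 * sup2_norm M R * tv_dist \<rho>' \<rho>)"
proof -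
  obtain C where C: "\<And>s. s \<in> space M \<Longrightarrow> norm (R s) \<le> C" using assms(7) by blast
  define \<rho> where "\<rho> = occupation M K \<gamma> z"
  define \<rho>' where "\<rho>' = occupation M K \<gamma> z'"
  have "prob_space \<rho>" "sets \<rho> = sets M" "prob_space \<rho>'" "sets \<rho>' = sets M"
    using occupation_in_prob_algebra[OF less_imp_le[OF assms(1)] assms(2,3)] assms(4,5)
    unfolding \<rho>_def \<rho>'_def by (auto simp: space_prob_algebra)
  note occupations = this
  define m where "m = (\<integral>s. R s \<partial>\<rho>)"
  define m' where "m' = (\<integral>s. R s \<partial>\<rho>')"
  have q: "(LINT s'|\<rho>'. (LINT s|\<rho>. R s \<bullet> R s')) = m \<bullet> m'"
    using integrable_bounded[OF prob_space.finite_measure _ assms(6) C] occupations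
    by (simp add: m_def m'_def)
  have "norm m * norm (m' - m) \<le> norm m * (2 * sup2_norm M R * tv_dist \<rho>' \<rho>)"
    unfolding m_def m'_def
    by (intro mult_left_mono norm_integral_diff_le_sup2_norm[OF _ _ _ _ assms(6) C] occupations)
      simp_all
  then show ?thesis
    using inner_ge_norm_mult_norm_diff[of m m']
    unfolding Let_def \<rho>_def[symmetric] \<rho>'_def[symmetric] q m_def[symmetric]
    by (simp add: algebra_simps)
qed

end
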